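(* Let $\mathcal{R}$ be a commutative ring with unity, $P$ a locally finite poset and $b$ an additive biderivation of $I(P,\mathcal{R})$. Let $x\le y$ and $u\le v$ in $P$. If at least one pair of elements among $\{x,y,u,v\}$ is not comparable, then $b(r_1e_{xy},r_2e_{uv})=0$ for all $r_1,r_2\in\mathcal{R}$.
   Context: $I(P,\mathcal{R})$ is the incidence algebra: functions $f:P\times P\to\mathcal{R}$ with $f(x,y)=0$ unless $x\le y$, with product $(fg)(x,y)=\sum_{x\le z\le y}f(x,z)g(z,y)$; $e_{xy}$ ($x\le y$) is the function equal to $1$ at $(x,y)$ and $0$ elsewhere. An additive biderivation is a map $b$ of two arguments, additive in each, with $b(\alpha\beta,\gamma)=\alpha b(\beta,\gamma)+b(\alpha,\gamma)\beta$ and $b(\alpha,\beta\gamma)=\beta b(\alpha,\gamma)+b(\alpha,\beta)\gamma$. *)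

theory Defs
  imports Main
begin

definition locally_finite_poset :: "'p::order itself \<Rightarrow> bool" where
  "locally_finite_poset _ \<longleftrightarrow> (\<forall>x y::'p. finite {x..y})"

definition incidence :: "('p::order \<Rightarrow> 'p \<Rightarrow> 'r::comm_ring_1) set" where
  "incidence = {f. \<forall>x y. \<not> x \<le> y \<longrightarrow> f x y = 0}"

definition inc_mult :: "('p::order \<Rightarrow> 'p \<Rightarrow> 'r::comm_ring_1) \<Rightarrow> ('p \<Rightarrow> 'p \<Rightarrow> 'r) \<Rightarrow> ('p \<Rightarrow> 'p \<Rightarrow> 'r)" where
  "inc_mult f g = (\<lambda>x y. \<Sum>z\<in>{x..y}. f x z * g z y)"

definition inc_add :: "('p \<Rightarrow> 'p \<Rightarrow> 'r::comm_ring_1) \<Rightarrow> ('p \<Rightarrow> 'p \<Rightarrow> 'r) \<Rightarrow> ('p \<Rightarrow> 'p \<Rightarrow> 'r)" where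
  "inc_add f g = (\<lambda>x y. f x y + g x y)"

definition scaled_unit :: "'r::comm_ring_1 \<Rightarrow> 'p \<Rightarrow> 'p \<Rightarrow> ('p \<Rightarrow> 'p \<Rightarrow> 'r)" where
  "scaled_unit r x y = (\<lambda>a c. if a = x \<and> c = y then r else 0)"

definition additive_biderivation ::
  "(('p::order \<Rightarrow> 'p \<Rightarrow> 'r::comm_ring_1) \<Rightarrow> ('p \<Rightarrow> 'p \<Rightarrow> 'r) \<Rightarrow> ('p \<Rightarrow> 'p \<Rightarrow> 'r)) \<Rightarrow> bool" where
  "additive_biderivation b \<longleftrightarrow>
     (\<forall>\<alpha>\<in>incidence. \<forall>\<beta>\<in>incidence. b \<alpha> \<beta> \<in> incidence) \<and>
     (\<forall>\<alpha>\<in>incidence. \<forall>\<beta>\<in>incidence. \<forall>\<gamma>\<in>incidence.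
        b (inc_add \<alpha> \<beta>) \<gamma> = inc_add (b \<alpha> \<gamma>) (b \<beta> \<gamma>) \<and>
        b \<alpha> (inc_add \<beta> \<gamma>) = inc_add (b \<alpha> \<beta>) (b \<alpha> \<gamma>) \<and>
        b (inc_mult \<alpha> \<beta>) \<gamma> = inc_add (inc_mult \<alpha> (b \<beta> \<gamma>)) (inc_mult (b \<alpha> \<gamma>) \<beta>) \<and>
        b \<alpha> (inc_mult \<beta> \<gamma>) = inc_add (inc_mult \<beta> (b \<alpha> \<gamma>)) (inc_mult (b \<alpha> \<beta>) \<gamma>))"

end

theory Submission
  imports Defs
begin

text \<open>Fixing either argument of a biderivation gives a derivation D of I(P,R). From
  r e_ac = (r e_ac) e_cc = e_aa (r e_ac) the Leibniz rule shows that, away from the entry (a,c),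
  D(r e_ac) is r D(e_cc) on row a, D(e_aa) r on column c, and zero elsewhere. Applying this to
  the left argument reduces every entry of b(r e_xy, r e_uv) to an entry of b(r e_xy, r e_uv)
  at (x,y), of b(e_yy, r e_uv) on row y, or of b(e_xx, r e_uv) on column x; applying it to the
  right argument, each of these can only be non-zero if x, y, u, v lie on a chain.\<close>

definition inc_derivation :: "(('p::order \<Rightarrow> 'p \<Rightarrow> 'r::comm_ring_1) \<Rightarrow> ('p \<Rightarrow> 'p \<Rightarrow> 'r)) \<Rightarrow> bool" where
  "inc_derivation D \<longleftrightarrow>
     (\<forall>\<alpha>\<in>incidence. \<forall>\<beta>\<in>incidence.
        D (inc_mult \<alpha> \<beta>) = inc_add (inc_mult \<alpha> (D \<beta>)) (inc_mult (D \<alpha>) \<beta>))"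

lemma additive_biderivation_left_derivation:
  assumes "additive_biderivation b" "\<gamma> \<in> incidence"
  shows "inc_derivation (\<lambda>\<alpha>. b \<alpha> \<gamma>)"
  using assms unfolding additive_biderivation_def inc_derivation_def by blast

lemma additive_biderivation_right_derivation:
  assumes "additive_biderivation b" "\<alpha> \<in> incidence"
  shows "inc_derivation (b \<alpha>)"
  using assms unfolding additive_biderivation_def inc_derivation_def by blast

lemma scaled_unit_in_incidence: "a \<le> c \<Longrightarrow> scaled_unit r a c \<in> incidence"
  unfolding incidence_def scaled_unit_def by auto

lemma locally_finite_posetD: "locally_finite_poset TYPE('p::order) \<Longrightarrow> finite {p..q::'p}"
  unfolding locally_finite_poset_def by blast

lemma inc_mult_scaled_unit_left:
  assumes "finite {p..q}"
  shows "inc_mult (scaled_unit r a c) g p q = (if p = a \<and> c \<in> {p..q} then r * g c q else 0)"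
proof -
  have "inc_mult (scaled_unit r a c) g p q
      = (\<Sum>z\<in>{p..q}. if p = a then (if z = c then r * g c q else 0) else 0)"
    unfolding inc_mult_def scaled_unit_def by (intro sum.cong) auto
  then show ?thesis
    using assms by (cases "p = a") (simp_all add: sum.delta')
qed

lemma inc_mult_scaled_unit_right:
  assumes "finite {p..q}"
  shows "inc_mult g (scaled_unit r a c) p q = (if q = c \<and> a \<in> {p..q} then g p a * r else 0)"
proof -
  have "inc_mult g (scaled_unit r a c) p q
      = (\<Sum>z\<in>{p..q}. if q = c then (if z = a then g p a * r else 0) else 0)"
    unfolding inc_mult_def scaled_unit_def by (intro sum.cong) auto
  then show ?thesis
    using assms by (cases "q = c") (simp_all add: sum.delta')
qed

lemma inc_mult_scaled_unit_idem_left: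
  assumes "locally_finite_poset TYPE('p::order)" "(a::'p) \<le> c"
  shows "inc_mult (scaled_unit 1 a a) (scaled_unit r a c) = scaled_unit r a c"
proof (intro ext)
  fix p q
  show "inc_mult (scaled_unit 1 a a) (scaled_unit r a c) p q = scaled_unit r a c p q"
    unfolding inc_mult_scaled_unit_left[OF locally_finite_posetD[OF assms(1)]]
    using assms(2) by (auto simp: scaled_unit_def)
qed

lemma inc_mult_scaled_unit_idem_right:
  assumes "locally_finite_poset TYPE('p::order)" "(a::'p) \<le> c"
  shows "inc_mult (scaled_unit r a c) (scaled_unit 1 c c) = scaled_unit r a c"
proof (intro ext)
  fix p q
  show "inc_mult (scaled_unit r a c) (scaled_unit 1 c c) p q = scaled_unit r a c p q"
    unfolding inc_mult_scaled_unit_right[OF locally_finite_posetD[OF assms(1)]]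
    using assms(2) by (auto simp: scaled_unit_def)
qed

context
  fixes D :: "('p::order \<Rightarrow> 'p \<Rightarrow> 'r::comm_ring_1) \<Rightarrow> ('p \<Rightarrow> 'p \<Rightarrow> 'r)"
  assumes lf: "locally_finite_poset TYPE('p)" and der: "inc_derivation D"
begin

lemma inc_derivation_scaled_unit_row:
  assumes "a \<le> c" "q \<noteq> c"
  shows "D (scaled_unit r a c) p q = (if p = a \<and> c \<le> q then r * D (scaled_unit 1 c c) c q else 0)"
proof -
  let ?A = "scaled_unit r a c" and ?E = "scaled_unit 1 c c"
  have "D ?A = D (inc_mult ?A ?E)"
    using inc_mult_scaled_unit_idem_right[OF lf assms(1), of r] by simp
  also have "\<dots> = inc_add (inc_mult ?A (D ?E)) (inc_mult (D ?A) ?E)"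
    using der assms(1) scaled_unit_in_incidence[of c c] scaled_unit_in_incidence
    unfolding inc_derivation_def by blast
  finally have "D ?A p q = (inc_add (inc_mult ?A (D ?E)) (inc_mult (D ?A) ?E)) p q" by simp
  then show ?thesis
    using assms unfolding inc_add_def inc_mult_scaled_unit_left[OF locally_finite_posetD[OF lf]]
      inc_mult_scaled_unit_right[OF locally_finite_posetD[OF lf]] by auto
qed

lemma inc_derivation_scaled_unit_column:
  assumes "a \<le> c" "p \<noteq> a"
  shows "D (scaled_unit r a c) p q = (if q = c \<and> p \<le> a then D (scaled_unit 1 a a) p a * r else 0)"
proof -
  let ?A = "scaled_unit r a c" and ?E = "scaled_unit 1 a a"
  have "D ?A = D (inc_mult ?E ?A)"
    using inc_mult_scaled_unit_idem_left[OF lf assms(1), of r] by simp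
  also have "\<dots> = inc_add (inc_mult ?E (D ?A)) (inc_mult (D ?E) ?A)"
    using der assms(1) scaled_unit_in_incidence[of a a] scaled_unit_in_incidence
    unfolding inc_derivation_def by blast
  finally have "D ?A p q = (inc_add (inc_mult ?E (D ?A)) (inc_mult (D ?E) ?A)) p q" by simp
  then show ?thesis
    using assms unfolding inc_add_def inc_mult_scaled_unit_left[OF locally_finite_posetD[OF lf]]
      inc_mult_scaled_unit_right[OF locally_finite_posetD[OF lf]] by auto
qed

lemma inc_derivation_scaled_unit_support:
  assumes "a \<le> c" "D (scaled_unit r a c) p q \<noteq> 0"
  shows "(p = a \<and> c \<le> q) \<or> (q = c \<and> p \<le> a)"
proof (cases "q = c")
  case True
  then show ?thesis
    using assms inc_derivation_scaled_unit_column[OF assms(1), of p r q]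
    by (cases "p = a") (auto split: if_splits)
next
  case False
  then show ?thesis
    using assms inc_derivation_scaled_unit_row[OF assms(1) False, of r p] by (auto split: if_splits)
qed

end

theorem mainTheorem9:
  fixes b :: "('p::order \<Rightarrow> 'p \<Rightarrow> 'r::comm_ring_1) \<Rightarrow> ('p \<Rightarrow> 'p \<Rightarrow> 'r) \<Rightarrow> ('p \<Rightarrow> 'p \<Rightarrow> 'r)"
    and x y u v :: 'p
  assumes "locally_finite_poset TYPE('p)"
    and "additive_biderivation b"
    and "x \<le> y" and "u \<le> v"
    and "\<exists>a\<in>{x, y, u, v}. \<exists>c\<in>{x, y, u, v}. \<not> a \<le> c \<and> \<not> c \<le> a"
  shows "\<forall>r1 r2 :: 'r. b (scaled_unit r1 x y) (scaled_unit r2 u v) = (\<lambda>_ _. 0)"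
proof (intro allI ext)
  fix r1 r2 :: 'r and p q :: 'p
  note lf = assms(1)
  let ?B = "scaled_unit r2 u v"
  have left: "inc_derivation (\<lambda>\<alpha>. b \<alpha> ?B)"
    using additive_biderivation_left_derivation assms(2,4) scaled_unit_in_incidence by blast
  have support: "(p' = u \<and> v \<le> q') \<or> (q' = v \<and> p' \<le> u)"
    if "a \<le> c" "b (scaled_unit s a c) ?B p' q' \<noteq> 0" for a c s p' q'
    using inc_derivation_scaled_unit_support[OF lf additive_biderivation_right_derivation
        [OF assms(2) scaled_unit_in_incidence[OF that(1)]] assms(4) that(2)] .
  have not_chain: "\<not> (y \<le> u \<or> v \<le> x \<or> (x = u \<and> v \<le> y) \<or> (y = v \<and> x \<le> u))"
    using assms(3-5) by (auto intro: order_trans)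
  consider "p = x" "q = y" | "p = x" "q \<noteq> y" | "p \<noteq> x" by blast
  then show "b (scaled_unit r1 x y) ?B p q = 0"
  proof cases
    case 1
    then show ?thesis using support[OF assms(3)] not_chain by blast
  next
    case 2
    have "b (scaled_unit 1 y y) ?B y q = 0"
      using support[of y y 1 y q] not_chain by auto
    then show ?thesis using inc_derivation_scaled_unit_row[OF lf left assms(3) 2(2), of r1 p] by simp
  next
    case 3
    have "b (scaled_unit 1 x x) ?B p x = 0"
      using support[of x x 1 p x] not_chain by auto
    then show ?thesis using inc_derivation_scaled_unit_column[OF lf left assms(3) 3, of r1 q] by simp
  qed
qed

end
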